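(* Let $X$ have finite second moment and characteristic function $f(t)={\bf E}e^{itX}$ with $$\int_{-\infty}^{+\infty}|t|\big(|f(t)|+|f'(t)|+|f''(t)|\big)\,dt<+\infty.$$ Then $X$ has a continuously differentiable density $p$ with finite total variation $$\|p\|_{TV}=\int|p'(x)|\,dx\le\frac12\int_{-\infty}^{+\infty}\big(|tf''(t)|+2|f'(t)|+|tf(t)|\big)\,dt.$$ *)

theory Defs
  imports "HOL-Probability.Probability"
begin

end

theory Submission
  imports Defs
begin

text \<open>
  Let \<open>\<mu>\<close> be the distribution of \<open>X\<close> and \<open>f\<close> its characteristic function.  A finite second
  moment makes \<open>f\<close> twice continuously differentiable, with \<open>f'(t) = \<integral> \<i>x exp(\<i>tx) d\<mu>\<close> and
  \<open>f''(t) = \<integral> (\<i>x)\<^sup>2 exp(\<i>tx) d\<mu>\<close>; since these are bounded, the hypothesis makes \<open>f\<close>, \<open>f'\<close>,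
  \<open>t f\<close>, \<open>t f'\<close> and \<open>t f''\<close> integrable.  Then:
    \<^item> by Levy's inversion theorem and Fubini, \<open>p(x) = Re (\<integral> f(t) exp(-\<i>xt) dt) / 2\<pi>\<close> is a
      continuous density of \<open>\<mu>\<close>;
    \<^item> differentiating under the integral, \<open>p'(x) = Re (\<integral> -\<i>t f(t) exp(-\<i>xt) dt) / 2\<pi>\<close>;
    \<^item> integrating by parts twice, \<open>x\<^sup>2 \<integral> t f(t) exp(-\<i>xt) dt = -\<integral> (2 f' + t f'') exp(-\<i>xt) dt\<close>,
      so \<open>(1 + x\<^sup>2) |p'(x)| \<le> (A + B) / 2\<pi>\<close> with \<open>A = \<integral> |t f|\<close> and \<open>B = \<integral> 2|f'| + |t f''|\<close>;
      as \<open>\<integral> dx / (1 + x\<^sup>2) = \<pi>\<close>, this gives \<open>\<integral> |p'| \<le> (A + B) / 2\<close>.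
\<close>

lemma tendsto_at_integral_norm_dominated:
  fixes r :: "real \<Rightarrow> 'b \<Rightarrow> 'c::{banach, second_countable_topology}"
  assumes w: "integrable N w" and meas: "\<And>u. r u \<in> borel_measurable N"
    and bound: "\<And>u y. y \<in> space N \<Longrightarrow> norm (r u y) \<le> w y"
    and lim: "\<And>y. y \<in> space N \<Longrightarrow> ((\<lambda>u. r u y) \<longlongrightarrow> 0) (at c)"
  shows "((\<lambda>u. \<integral>y. norm (r u y) \<partial>N) \<longlongrightarrow> 0) (at c)"
proof (subst tendsto_at_iff_sequentially, intro allI impI)
  fix U :: "nat \<Rightarrow> real" assume U: "\<forall>i. U i \<in> UNIV - {c}" "U \<longlonglongrightarrow> c"
  then have U_at: "filterlim U (at c) sequentially"
    by (auto simp: filterlim_at)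
  have "(\<lambda>i. \<integral>y. norm (r (U i) y) \<partial>N) \<longlonglongrightarrow> (\<integral>y. 0 \<partial>N)"
  proof (rule integral_dominated_convergence[where w=w])
    show "AE y in N. (\<lambda>i. norm (r (U i) y)) \<longlonglongrightarrow> 0"
      using lim by (auto intro!: AE_I2 tendsto_norm_zero filterlim_compose[OF _ U_at])
    show "AE y in N. norm (norm (r (U i) y)) \<le> w y" for i
      using bound by (auto intro!: AE_I2)
  qed (use w meas in auto)
  then show "((\<lambda>u. \<integral>y. norm (r u y) \<partial>N) \<circ> U) \<longlonglongrightarrow> 0" by (simp add: o_def)
qed

lemma norm_of_real_diff: "cmod (complex_of_real u - complex_of_real s) = \<bar>u - s\<bar>"
  by (metis norm_of_real of_real_diff)

lemma norm_iexp_minus_one_le: "cmod (iexp v - 1) \<le> 2"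
  using norm_triangle_ineq4[of "iexp v" 1] by (simp add: norm_exp_i_times)

lemma norm_iexp_taylor1_le_square: "cmod (iexp v - 1 - \<i> * v) \<le> v\<^sup>2 / 2"
  using iexp_approx1[of v 1] by (simp add: power2_eq_square algebra_simps)

lemma norm_iexp_taylor1_le_abs: "cmod (iexp v - 1 - \<i> * v) \<le> 2 * \<bar>v\<bar>"
  using iexp_approx2[of v 1] by (simp add: algebra_simps)

lemma norm_iexp_difference_quotient_le:
  fixes c d :: real
  shows "cmod (iexp (d * c) - 1 - \<i> * (d * c)) / \<bar>d\<bar> \<le> 2 * \<bar>c\<bar>"
    and "cmod (iexp (d * c) - 1 - \<i> * (d * c)) / \<bar>d\<bar> \<le> c\<^sup>2 / 2 * \<bar>d\<bar>"
proof -
  have "cmod (iexp (d * c) - 1 - \<i> * (d * c)) / \<bar>d\<bar> \<le> 2 * \<bar>d * c\<bar> / \<bar>d\<bar>"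
    by (intro divide_right_mono norm_iexp_taylor1_le_abs) simp
  then show "cmod (iexp (d * c) - 1 - \<i> * (d * c)) / \<bar>d\<bar> \<le> 2 * \<bar>c\<bar>"
    by (cases "d = 0") (simp_all add: abs_mult)
  have "cmod (iexp (d * c) - 1 - \<i> * (d * c)) / \<bar>d\<bar> \<le> (d * c)\<^sup>2 / 2 / \<bar>d\<bar>"
    by (intro divide_right_mono norm_iexp_taylor1_le_square) simp
  then show "cmod (iexp (d * c) - 1 - \<i> * (d * c)) / \<bar>d\<bar> \<le> c\<^sup>2 / 2 * \<bar>d\<bar>"
    by (cases "d = 0") (simp_all add: power2_eq_square abs_mult_self_eq field_simps)
qed

lemma integrable_iexp_mult:
  fixes h :: "'b \<Rightarrow> complex" and k :: "'b \<Rightarrow> real"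
  assumes "integrable N h" "k \<in> borel_measurable N"
  shows "integrable N (\<lambda>y. h y * iexp (s * k y))"
  by (rule Bochner_Integration.integrable_bound[OF integrable_norm[OF assms(1)]])
     (use assms in \<open>auto simp: norm_mult norm_exp_i_times\<close>)

lemma isCont_iexp_integral:
  fixes h :: "'b \<Rightarrow> complex" and k :: "'b \<Rightarrow> real"
  assumes h: "integrable N h" and k: "k \<in> borel_measurable N"
  shows "isCont (\<lambda>s. \<integral>y. h y * iexp (s * k y) \<partial>N) s"
proof -
  let ?G = "\<lambda>s. \<integral>y. h y * iexp (s * k y) \<partial>N"
  let ?r = "\<lambda>z y. h y * iexp (s * k y) * (iexp ((z - s) * k y) - 1)"
  have diff: "?G z - ?G s = (\<integral>y. ?r z y \<partial>N)" for z
  proof -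
    have "?G z - ?G s = (\<integral>y. h y * iexp (z * k y) - h y * iexp (s * k y) \<partial>N)"
      using integrable_iexp_mult[OF h k] by simp
    also have "\<dots> = (\<integral>y. ?r z y \<partial>N)"
      by (rule Bochner_Integration.integral_cong) (auto simp: algebra_simps exp_add[symmetric])
    finally show ?thesis .
  qed
  have "((\<lambda>z. \<integral>y. norm (?r z y) \<partial>N) \<longlongrightarrow> 0) (at s)"
  proof (rule tendsto_at_integral_norm_dominated[where w="\<lambda>y. 2 * norm (h y)"])
    show "norm (?r u y) \<le> 2 * cmod (h y)" for u y
      using mult_left_mono[OF norm_iexp_minus_one_le[of "(u - s) * k y"], of "cmod (h y)"]
      by (simp add: norm_mult norm_exp_i_times mult.commute)
    show "((\<lambda>u. ?r u y) \<longlongrightarrow> 0) (at s)" for y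
      by (rule tendsto_eq_intros refl | simp)+
  qed (use h k in auto)
  then have "((\<lambda>z. ?G z - ?G s) \<longlongrightarrow> 0) (at s)"
    unfolding diff
    by (rule Lim_null_comparison[rotated]) (intro always_eventually allI integral_norm_bound)
  then show ?thesis
    unfolding isCont_def by (simp add: LIM_zero_iff)
qed

text \<open>Differentiation under the integral sign: the difference quotient differs from the candidate
  derivative by the integral of a remainder bounded by \<open>2 |h k|\<close> (domination) and by
  \<open>|h| k\<^sup>2 |z - s| / 2\<close> (pointwise convergence).\<close>

lemma has_vector_derivative_iexp_integral:
  fixes h :: "'b \<Rightarrow> complex" and k :: "'b \<Rightarrow> real"
  assumes h: "integrable N h" and hk: "integrable N (\<lambda>y. h y * k y)" and k: "k \<in> borel_measurable N"
  shows "((\<lambda>s. \<integral>y. h y * iexp (s * k y) \<partial>N) has_vector_derivative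
            (\<integral>y. h y * (\<i> * k y) * iexp (s * k y) \<partial>N)) (at s)"
proof -
  let ?G = "\<lambda>s. \<integral>y. h y * iexp (s * k y) \<partial>N"
  let ?D = "\<integral>y. h y * (\<i> * k y) * iexp (s * k y) \<partial>N"
  let ?E = "\<lambda>z y. iexp ((z - s) * k y) - 1 - \<i> * ((z - s) * k y)"
  let ?r = "\<lambda>z y. h y * iexp (s * k y) * ?E z y / complex_of_real (z - s)"
  have int_D: "integrable N (\<lambda>y. h y * (\<i> * k y) * iexp (s * k y))"
    using integrable_iexp_mult[OF integrable_mult_right[OF hk, of \<i>] k] by (simp add: mult_ac)
  have quot: "(?G z - ?G s - (z - s) *\<^sub>R ?D) / complex_of_real (z - s) = (\<integral>y. ?r z y \<partial>N)" for z
  proof -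
    have "?G z - ?G s - (z - s) *\<^sub>R ?D = (\<integral>y. h y * iexp (z * k y) - h y * iexp (s * k y)
        - (z - s) *\<^sub>R (h y * (\<i> * k y) * iexp (s * k y)) \<partial>N)"
      using integrable_iexp_mult[OF h k] int_D by simp
    also have "\<dots> = (\<integral>y. h y * iexp (s * k y) * ?E z y \<partial>N)"
      by (rule Bochner_Integration.integral_cong)
         (auto simp: algebra_simps exp_add[symmetric] scaleR_conv_of_real)
    finally show ?thesis by (simp add: integral_divide_zero)
  qed
  have norm_r: "norm (?r z y) = cmod (h y) * (cmod (?E z y) / \<bar>z - s\<bar>)" for z y
    by (simp add: norm_mult norm_divide norm_exp_i_times norm_of_real_diff)
  have "((\<lambda>z. \<integral>y. norm (?r z y) \<partial>N) \<longlongrightarrow> 0) (at s)"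
  proof (rule tendsto_at_integral_norm_dominated[where w="\<lambda>y. 2 * norm (h y * k y)"])
    show "norm (?r u y) \<le> 2 * cmod (h y * k y)" for u y
      unfolding norm_r
      using mult_left_mono[OF norm_iexp_difference_quotient_le(1)[of "u - s" "k y"], of "cmod (h y)"]
      by (simp add: norm_mult)
    show "((\<lambda>u. ?r u y) \<longlongrightarrow> 0) (at s)" for y
    proof (rule Lim_null_comparison[OF always_eventually])
      show "\<forall>u. norm (?r u y) \<le> cmod (h y) * ((k y)\<^sup>2 / 2 * \<bar>u - s\<bar>)"
        unfolding norm_r by (intro allI mult_left_mono norm_iexp_difference_quotient_le(2)) simp
      show "((\<lambda>u. cmod (h y) * ((k y)\<^sup>2 / 2 * \<bar>u - s\<bar>)) \<longlongrightarrow> 0) (at s)"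
        by (rule tendsto_eq_intros refl | simp)+
    qed
  qed (use h hk k in auto)
  then have "((\<lambda>z. (?G z - ?G s - (z - s) *\<^sub>R ?D) / complex_of_real (z - s)) \<longlongrightarrow> 0) (at s)"
    unfolding quot
    by (rule Lim_null_comparison[rotated]) (intro always_eventually allI integral_norm_bound)
  then have "((\<lambda>z. norm (?G z - ?G s - (z - s) *\<^sub>R ?D) / norm (z - s)) \<longlongrightarrow> 0) (at s)"
    using tendsto_norm_zero by (force simp: norm_divide norm_of_real_diff)
  then show ?thesis
    unfolding has_vector_derivative_def has_derivative_iff_norm
    by (simp add: bounded_linear_scaleR_left)
qed

text \<open>\<open>char_moment M k\<close> is the \<open>k\<close>-th derivative of the characteristic function of \<open>M\<close>
  whenever the \<open>k\<close>-th moment exists.\<close>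

definition char_moment :: "real measure \<Rightarrow> nat \<Rightarrow> real \<Rightarrow> complex" where
  "char_moment M k t = (\<integral>x. (\<i> * x) ^ k * iexp (t * x) \<partial>M)"

lemma char_moment_0: "char_moment M 0 = char M"
  by (simp add: fun_eq_iff char_moment_def char_def)

text \<open>A finite second moment gives finite moments of orders \<open>0\<close>, \<open>1\<close>, \<open>2\<close>,
  as \<open>|x| \<le> 1 + x\<^sup>2\<close>.\<close>

lemma (in prob_space) integrable_power_le_2:
  fixes X :: "'a \<Rightarrow> real"
  assumes X: "X \<in> borel_measurable M" and second: "integrable M (\<lambda>x. (X x)\<^sup>2)" and k: "k \<le> 2"
  shows "integrable M (\<lambda>x. X x ^ k)"
proof -
  have "integrable M X"
  proof (rule Bochner_Integration.integrable_bound[where f="\<lambda>x. 1 + (X x)\<^sup>2"])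
    show "AE x in M. norm (X x) \<le> norm (1 + (X x)\<^sup>2)"
    proof (rule AE_I2)
      fix x
      have "0 \<le> (\<bar>X x\<bar> - 1)\<^sup>2" by simp
      then show "norm (X x) \<le> norm (1 + (X x)\<^sup>2)"
        by (simp add: power2_eq_square algebra_simps abs_mult_self_eq)
    qed
  qed (use X second in auto)
  then show ?thesis
    using k second by (auto simp: le_Suc_eq numeral_2_eq_2)
qed

lemma integrable_char_moment_integrand:
  fixes M :: "real measure"
  assumes "integrable M (\<lambda>x. x ^ k)"
  shows "integrable M (\<lambda>x. (\<i> * x) ^ k)"
proof -
  have "integrable M (\<lambda>x. \<i> ^ k * complex_of_real (x ^ k))"
    using assms(1) by (intro integrable_mult_right integrable_of_real)
  then show ?thesis by (simp add: power_mult_distrib)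
qed

lemma (in real_distribution) continuous_on_char_moment:
  assumes "integrable M (\<lambda>x. x ^ k)"
  shows "continuous_on UNIV (char_moment M k)"
  unfolding char_moment_def[abs_def]
  by (intro continuous_at_imp_continuous_on ballI
      isCont_iexp_integral[OF integrable_char_moment_integrand[OF assms]]) simp

lemma norm_char_moment_le:
  "cmod (char_moment M k t) \<le> (\<integral>x. \<bar>x\<bar> ^ k \<partial>M)"
proof -
  have "cmod (char_moment M k t) \<le> (\<integral>x. cmod ((\<i> * x) ^ k * iexp (t * x)) \<partial>M)"
    unfolding char_moment_def by (rule integral_norm_bound)
  also have "\<dots> = (\<integral>x. \<bar>x\<bar> ^ k \<partial>M)"
    by (simp add: norm_mult norm_power norm_exp_i_times)
  finally show ?thesis .
qed

lemma (in real_distribution) has_vector_derivative_char_moment: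
  assumes "integrable M (\<lambda>x. x ^ k)" "integrable M (\<lambda>x. x ^ Suc k)"
  shows "(char_moment M k has_vector_derivative char_moment M (Suc k) t) (at t)"
proof -
  have "integrable M (\<lambda>x. - \<i> * (\<i> * x) ^ Suc k)"
    by (intro integrable_mult_right integrable_char_moment_integrand[OF assms(2)])
  then have "integrable M (\<lambda>x. (\<i> * x) ^ k * complex_of_real x)"
    by (simp add: algebra_simps)
  from has_vector_derivative_iexp_integral[OF integrable_char_moment_integrand[OF assms(1)] this,
      where s=t]
  show ?thesis
    unfolding char_moment_def[abs_def] by (simp add: power_Suc2 mult_ac)
qed

lemma emeasure_lborel_Ici: "emeasure lborel {a::real..} = \<infinity>"
proof (rule ccontr)
  assume "emeasure lborel {a::real..} \<noteq> \<infinity>"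
  then obtain c where c: "emeasure lborel {a..} = ennreal c" "0 \<le> c"
    by (cases "emeasure lborel {a::real..}") auto
  have "emeasure lborel {a..a + c + 1} \<le> emeasure lborel {a..}"
    by (rule emeasure_mono) auto
  then show False using c by (simp add: ennreal_le_iff)
qed

lemma integrable_tendsto_at_top_imp_zero:
  fixes u :: "real \<Rightarrow> 'a::{banach, second_countable_topology}"
  assumes u: "integrable lborel u" and lim: "(u \<longlongrightarrow> L) at_top"
  shows "L = 0"
proof (rule ccontr)
  assume L: "L \<noteq> 0"
  then have "\<forall>\<^sub>F T in at_top. dist (u T) L < norm L / 2"
    using lim L unfolding tendsto_iff by (metis half_gt_zero zero_less_norm_iff)
  then obtain T0 where T0: "\<And>T. T \<ge> T0 \<Longrightarrow> dist (u T) L < norm L / 2"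
    by (auto simp: eventually_at_top_linorder)
  have "norm L / 2 * indicator {T0..} x \<le> norm (u x)" for x
  proof (cases "x \<ge> T0")
    case True
    have "norm L \<le> norm (u x) + dist (u x) L"
      by (metis dist_commute dist_norm norm_triangle_sub add.commute)
    with T0[OF True] True show ?thesis by (simp add: indicator_def)
  qed simp
  then have "integrable lborel (\<lambda>x. norm L / 2 * indicator {T0..} x :: real)"
    by (intro Bochner_Integration.integrable_bound[OF integrable_norm[OF u]]) (auto intro!: AE_I2)
  then have "integrable lborel (\<lambda>x. 2 / norm L * (norm L / 2 * indicator {T0..} x) :: real)"
    by (rule integrable_mult_right)
  then have "integrable lborel (indicator {T0..} :: real \<Rightarrow> real)"
    using L by simp
  then show False
    by (simp add: integrable_indicator_iff emeasure_lborel_Ici)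
qed

lemma tendsto_integral_Ioo_at_top:
  fixes h :: "real \<Rightarrow> 'a::{banach, second_countable_topology}"
  assumes h: "integrable lborel h"
  shows "((\<lambda>T. \<integral>t. indicator {- T<..<T} t *\<^sub>R h t \<partial>lborel) \<longlongrightarrow> (\<integral>t. h t \<partial>lborel)) at_top"
proof (rule integral_dominated_convergence_at_top[where w="\<lambda>t. norm (h t)"])
  show "AE t in lborel. ((\<lambda>T. indicator {- T<..<T} t *\<^sub>R h t) \<longlongrightarrow> h t) at_top"
  proof (rule AE_I2, rule tendsto_eventually)
    fix t :: real
    show "\<forall>\<^sub>F T in at_top. indicator {- T<..<T} t *\<^sub>R h t = h t"
      using eventually_gt_at_top[of "\<bar>t\<bar>"] by eventually_elim (auto split: split_indicator)
  qed
  show "\<forall>\<^sub>F T in at_top. AE t in lborel. norm (indicator {- T<..<T} t *\<^sub>R h t) \<le> norm (h t)"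
    by (auto intro!: always_eventually AE_I2 split: split_indicator)
qed (use h in auto)

text \<open>A \<open>C\<^sup>1\<close> function with integrable derivative has a limit at \<open>+\<infinity>\<close> (by the
  fundamental theorem of calculus); if it is integrable itself, that limit is \<open>0\<close>.\<close>

lemma integrable_derivative_tendsto_zero:
  fixes u u' :: "real \<Rightarrow> complex"
  assumes der: "\<And>t. (u has_vector_derivative u' t) (at t)" and cont: "continuous_on UNIV u'"
    and u: "integrable lborel u" and u': "integrable lborel u'"
  shows "(u \<longlongrightarrow> 0) at_top"
proof -
  have FTC: "u 0 + (\<integral>t. indicator {0..T} t *\<^sub>R u' t \<partial>lborel) = u T" if "0 \<le> T" for T
  proof -
    have "(LBINT t=ereal 0..ereal T. u' t) = u T - u 0"
      by (rule interval_integral_FTC_finite)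
         (auto intro: continuous_on_subset[OF cont] has_vector_derivative_at_within der)
    then show ?thesis using that by (simp add: interval_integral_Icc set_lebesgue_integral_def)
  qed
  define L where "L = u 0 + (\<integral>t. indicator {0..} t *\<^sub>R u' t \<partial>lborel)"
  have "((\<lambda>T. \<integral>t. indicator {0..T} t *\<^sub>R u' t \<partial>lborel) \<longlongrightarrow> (\<integral>t. indicator {0..} t *\<^sub>R u' t \<partial>lborel)) at_top"
  proof (rule integral_dominated_convergence_at_top[where w="\<lambda>t. norm (u' t)"])
    show "AE t in lborel. ((\<lambda>T. indicator {0..T} t *\<^sub>R u' t) \<longlongrightarrow> indicator {0..} t *\<^sub>R u' t) at_top"
    proof (rule AE_I2, rule tendsto_eventually)
      fix t :: real
      show "\<forall>\<^sub>F T in at_top. indicator {0..T} t *\<^sub>R u' t = indicator {0..} t *\<^sub>R u' t"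
        using eventually_ge_at_top[of t] by eventually_elim (auto split: split_indicator)
    qed
    show "\<forall>\<^sub>F T in at_top. AE t in lborel. norm (indicator {0..T} t *\<^sub>R u' t) \<le> norm (u' t)"
      by (auto intro!: always_eventually AE_I2 split: split_indicator)
  qed (use u' in auto)
  then have "((\<lambda>T. u 0 + (\<integral>t. indicator {0..T} t *\<^sub>R u' t \<partial>lborel)) \<longlongrightarrow> L) at_top"
    unfolding L_def by (intro tendsto_intros)
  moreover have "\<forall>\<^sub>F T in at_top. u 0 + (\<integral>t. indicator {0..T} t *\<^sub>R u' t \<partial>lborel) = u T"
    using eventually_ge_at_top[of 0] by eventually_elim (simp add: FTC)
  ultimately have lim: "(u \<longlongrightarrow> L) at_top"
    using Lim_transform_eventually by blast
  with integrable_tendsto_at_top_imp_zero[OF u lim] show ?thesis by simp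
qed

text \<open>The integral over the line of the derivative of an integrable \<open>C\<^sup>1\<close> function with
  integrable derivative vanishes, since the function tends to \<open>0\<close> at both ends.\<close>

lemma integral_derivative_eq_zero:
  fixes u u' :: "real \<Rightarrow> complex"
  assumes der: "\<And>t. (u has_vector_derivative u' t) (at t)" and cont: "continuous_on UNIV u'"
    and u: "integrable lborel u" and u': "integrable lborel u'"
  shows "(\<integral>t. u' t \<partial>lborel) = 0"
proof -
  have top: "(u \<longlongrightarrow> 0) at_top"
    by (rule integrable_derivative_tendsto_zero[OF der cont u u'])
  have bot: "((\<lambda>t. u (- t)) \<longlongrightarrow> 0) at_top"
  proof (rule integrable_derivative_tendsto_zero[where u'="\<lambda>t. - u' (- t)"])
    show "((\<lambda>t. u (- t)) has_vector_derivative - u' (- t)) (at t)" for t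
      using vector_diff_chain_at[OF has_vector_derivative_minus[OF has_vector_derivative_id] der]
      by (simp add: o_def)
    show "continuous_on UNIV (\<lambda>t. - u' (- t))"
      by (intro continuous_intros continuous_on_compose2[OF cont]) auto
    show "integrable lborel (\<lambda>t. u (- t))"
      using lborel_integrable_real_affine_iff[of "-1" u 0] u by simp
    show "integrable lborel (\<lambda>t. - u' (- t))"
      using lborel_integrable_real_affine_iff[of "-1" u' 0] u' by simp
  qed
  have FTC: "u T - u (- T) = (\<integral>t. indicator {- T<..<T} t *\<^sub>R u' t \<partial>lborel)" if "0 \<le> T" for T
  proof -
    have "(LBINT t=ereal (- T)..ereal T. u' t) = u T - u (- T)"
      by (rule interval_integral_FTC_finite)
         (auto intro: continuous_on_subset[OF cont] has_vector_derivative_at_within der)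
    then show ?thesis
      using that by (simp add: interval_lebesgue_integral_def set_lebesgue_integral_def)
  qed
  have "((\<lambda>T. \<integral>t. indicator {- T<..<T} t *\<^sub>R u' t \<partial>lborel) \<longlongrightarrow> 0 - 0) at_top"
  proof (rule Lim_transform_eventually)
    show "((\<lambda>T. u T - u (- T)) \<longlongrightarrow> 0 - 0) at_top"
      by (intro tendsto_intros top bot)
    show "\<forall>\<^sub>F T in at_top. u T - u (- T) = (\<integral>t. indicator {- T<..<T} t *\<^sub>R u' t \<partial>lborel)"
      using eventually_ge_at_top[of 0] by eventually_elim (simp add: FTC)
  qed
  with tendsto_integral_Ioo_at_top[OF u'] show ?thesis
    using tendsto_unique by force
qed

text \<open>The Fourier integral, with the sign convention of the inversion formula.\<close>

definition fourier :: "(real \<Rightarrow> complex) \<Rightarrow> real \<Rightarrow> complex" where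
  "fourier g x = (\<integral>t. g t * iexp (x * - t) \<partial>lborel)"

lemma norm_fourier_le: "cmod (fourier g x) \<le> (\<integral>t. cmod (g t) \<partial>lborel)"
proof -
  have "cmod (fourier g x) \<le> (\<integral>t. cmod (g t * iexp (x * - t)) \<partial>lborel)"
    unfolding fourier_def by (rule integral_norm_bound)
  then show ?thesis by (simp add: norm_mult norm_exp_i_times)
qed

lemma continuous_on_fourier:
  assumes "integrable lborel g"
  shows "continuous_on UNIV (fourier g)"
  unfolding fourier_def[abs_def]
  by (intro continuous_at_imp_continuous_on ballI isCont_iexp_integral[OF assms]) simp

lemma borel_measurable_fourier: "integrable lborel g \<Longrightarrow> fourier g \<in> borel_measurable borel"
  by (intro borel_measurable_continuous_onI continuous_on_fourier)

lemma integrable_indicator_fourier: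
  assumes "integrable lborel g"
  shows "integrable lborel (\<lambda>x. indicator {a<..b} x *\<^sub>R fourier g x)"
proof (rule Bochner_Integration.integrable_bound)
  show "integrable lborel (\<lambda>x. indicator {a<..b} x * (\<integral>t. cmod (g t) \<partial>lborel))"
    by (cases "a \<le> b") (simp_all add: integrable_indicator_iff)
  show "(\<lambda>x. indicator {a<..b} x *\<^sub>R fourier g x) \<in> borel_measurable lborel"
    using borel_measurable_fourier[OF assms] by simp
qed (auto simp: indicator_def intro!: AE_I2 norm_fourier_le)

lemma has_vector_derivative_fourier:
  assumes "integrable lborel g" "integrable lborel (\<lambda>t. t * g t)"
  shows "(fourier g has_vector_derivative fourier (\<lambda>t. - \<i> * t * g t) x) (at x)"
proof -
  have "integrable lborel (\<lambda>t. g t * complex_of_real (- t))"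
    using integrable_mult_right[OF assms(2), of "-1"] by (simp add: mult_ac)
  from has_vector_derivative_iexp_integral[OF assms(1) this, where s=x]
  show ?thesis
    unfolding fourier_def[abs_def] by (simp add: mult_ac)
qed

lemma has_vector_derivative_iexp_linear:
  "((\<lambda>t. iexp (x * - t)) has_vector_derivative - \<i> * x * iexp (x * - t)) (at t)"
proof -
  have "((\<lambda>t::real. x * - t) has_vector_derivative - x) (at t)"
    by (auto intro!: derivative_eq_intros)
  from vector_diff_chain_at[OF this has_vector_derivative_iexp]
  show ?thesis by (simp add: o_def scaleR_conv_of_real algebra_simps)
qed

text \<open>The boundary terms vanish because the product of \<open>a\<close> with the Fourier kernel is
  integrable together with its derivative.\<close>

lemma fourier_derivative:
  fixes a a' :: "real \<Rightarrow> complex"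
  assumes der: "\<And>t. (a has_vector_derivative a' t) (at t)"
    and cont_a: "continuous_on UNIV a" and cont_a': "continuous_on UNIV a'"
    and a: "integrable lborel a" and a': "integrable lborel a'"
  shows "fourier a' x = \<i> * x * fourier a x"
proof -
  let ?e = "\<lambda>t. iexp (x * - t)"
  have int_a: "integrable lborel (\<lambda>t. a t * ?e t)"
    using integrable_iexp_mult[OF a, of "\<lambda>t. - t" x] by simp
  have int_a': "integrable lborel (\<lambda>t. a' t * ?e t)"
    using integrable_iexp_mult[OF a', of "\<lambda>t. - t" x] by simp
  have "(\<integral>t. a' t * ?e t + - \<i> * x * (a t * ?e t) \<partial>lborel) = 0"
  proof (rule integral_derivative_eq_zero[where u="\<lambda>t. a t * ?e t"])
    show "((\<lambda>t. a t * ?e t) has_vector_derivative a' t * ?e t + - \<i> * x * (a t * ?e t)) (at t)" for t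
      using has_vector_derivative_mult[OF der[of t] has_vector_derivative_iexp_linear[of x t]]
      by (simp add: algebra_simps)
    show "continuous_on UNIV (\<lambda>t. a' t * ?e t + - \<i> * x * (a t * ?e t))"
      by (intro continuous_intros cont_a cont_a')
    show "integrable lborel (\<lambda>t. a' t * ?e t + - \<i> * x * (a t * ?e t))"
      using int_a int_a' by simp
  qed (rule int_a)
  then show ?thesis
    using int_a int_a' by (simp add: fourier_def)
qed

lemma integral_indicator_Ioc_iexp:
  assumes "t \<noteq> 0" "a \<le> b"
  shows "(\<integral>x. indicator {a<..b} x *\<^sub>R iexp (x * - t) \<partial>lborel)
    = (iexp (- (t * a)) - iexp (- (t * b))) / (\<i> * t)"
proof -
  let ?G = "\<lambda>x. iexp (x * - t) / (- \<i> * t)"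
  have "(?G has_vector_derivative iexp (x * - t)) (at x within S)" for x S
  proof -
    have "((\<lambda>x. x * - t) has_vector_derivative - t) (at x)"
      by (auto intro!: derivative_eq_intros)
    from vector_diff_chain_at[OF this has_vector_derivative_iexp]
    have "((\<lambda>x. iexp (x * - t)) has_vector_derivative - \<i> * t * iexp (x * - t)) (at x)"
      by (simp add: o_def scaleR_conv_of_real algebra_simps)
    moreover have "- \<i> * t * iexp (x * - t) / (- \<i> * t) = iexp (x * - t)"
      using assms(1) by simp
    ultimately show ?thesis
      using has_vector_derivative_divide has_vector_derivative_at_within by metis
  qed
  then have "(CLBINT x=a..b. iexp (x * - t)) = ?G b - ?G a"
    by (intro interval_integral_FTC_finite continuous_intros)
  moreover have "?G b - ?G a = (iexp (- (t * a)) - iexp (- (t * b))) / (\<i> * t)"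
    using assms(1) by (simp add: field_simps mult.commute)
  ultimately show ?thesis
    using assms(2) by (simp add: interval_integral_Ioc set_lebesgue_integral_def)
qed

lemma integral_Levy_kernel:
  fixes \<phi> :: "real \<Rightarrow> complex"
  assumes \<phi>: "integrable lborel \<phi>" and ab: "a \<le> b"
  shows "(\<integral>t. (iexp (- (t * a)) - iexp (- (t * b))) / (\<i> * t) * \<phi> t \<partial>lborel)
    = (\<integral>x. indicator {a<..b} x *\<^sub>R fourier \<phi> x \<partial>lborel)"
proof -
  let ?k = "\<lambda>x t. indicator {a<..b} x *\<^sub>R (\<phi> t * iexp (x * - t))"
  have [measurable]: "\<phi> \<in> borel_measurable lborel"
    using \<phi> by auto
  have "(\<integral>t. (iexp (- (t * a)) - iexp (- (t * b))) / (\<i> * t) * \<phi> t \<partial>lborel)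
      = (\<integral>t. \<integral>x. ?k x t \<partial>lborel \<partial>lborel)"
  proof (rule integral_cong_AE)
    show "AE t in lborel. (iexp (- (t * a)) - iexp (- (t * b))) / (\<i> * t) * \<phi> t
        = (\<integral>x. ?k x t \<partial>lborel)"
      using AE_lborel_singleton[of 0]
    proof eventually_elim
      case (elim t)
      have "(iexp (- (t * a)) - iexp (- (t * b))) / (\<i> * t) * \<phi> t
          = (\<integral>x. indicator {a<..b} x *\<^sub>R iexp (x * - t) \<partial>lborel) * \<phi> t"
        by (simp only: integral_indicator_Ioc_iexp[OF elim ab])
      also have "\<dots> = (\<integral>x. (indicator {a<..b} x *\<^sub>R iexp (x * - t)) * \<phi> t \<partial>lborel)"
        by (rule integral_mult_left_zero[symmetric])
      also have "\<dots> = (\<integral>x. ?k x t \<partial>lborel)"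
        by (rule Bochner_Integration.integral_cong) (auto simp: mult_ac)
      finally show ?case .
    qed
  qed measurable
  also have "\<dots> = (\<integral>x. \<integral>t. ?k x t \<partial>lborel \<partial>lborel)"
  proof (rule lborel_pair.Fubini_integral, rule lborel_pair.Fubini_integrable)
    have "(\<lambda>x. \<integral>t. norm (?k x t) \<partial>lborel) = (\<lambda>x. indicator {a<..b} x * (\<integral>t. cmod (\<phi> t) \<partial>lborel))"
      by (rule ext) (auto simp: indicator_def norm_mult norm_exp_i_times)
    then show "integrable lborel (\<lambda>x. \<integral>t. norm (case (x, t) of (x, t) \<Rightarrow> ?k x t) \<partial>lborel)"
      using ab by (simp add: integrable_indicator_iff)
    show "AE x in lborel. integrable lborel (\<lambda>t. case (x, t) of (x, t) \<Rightarrow> ?k x t)"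
      using integrable_iexp_mult[OF \<phi>, of "\<lambda>t. - t"] by simp
  qed measurable
  also have "\<dots> = (\<integral>x. indicator {a<..b} x *\<^sub>R fourier \<phi> x \<partial>lborel)"
    by (simp add: fourier_def)
  finally show ?thesis .
qed

lemma (in real_distribution) Levy_inversion_integrable:
  assumes \<phi>: "integrable lborel (char M)"
    and ab: "a \<le> b" "measure M {a} = 0" "measure M {b} = 0"
  shows "measure M {a<..b} = (\<integral>x. indicator {a<..b} x * (Re (fourier (char M) x) / (2 * pi)) \<partial>lborel)"
proof -
  define F where "F t = (iexp (- (t * a)) - iexp (- (t * b))) / (\<i> * t)" for t
  have F_bound: "cmod (F t) \<le> b - a" for t
    using Levy_Inversion_aux2[of "- b" "- a" t] ab(1) by (cases "t = 0") (simp_all add: F_def)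
  have [measurable]: "F \<in> borel_measurable lborel"
    unfolding F_def[abs_def] by measurable
  have "integrable lborel (\<lambda>t. (b - a) * cmod (char M t))"
    using \<phi> by simp
  then have "integrable lborel (\<lambda>t. F t * char M t)"
    by (rule Bochner_Integration.integrable_bound)
       (use F_bound \<phi> ab(1) in \<open>auto intro!: AE_I2 mult_right_mono simp: norm_mult abs_mult\<close>)
  from filterlim_compose[OF tendsto_integral_Ioo_at_top[OF this] filterlim_real_sequentially]
  have dc: "(\<lambda>T::nat. \<integral>t. indicator {- real T<..<real T} t *\<^sub>R (F t * char M t) \<partial>lborel)
      \<longlonglongrightarrow> (\<integral>t. F t * char M t \<partial>lborel)" .
  have Levy: "(\<lambda>T::nat. complex_of_real (1 / (2 * pi)) *
      (CLBINT t=ereal (real_of_int (- int T))..ereal (real T). F t * char M t))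
      \<longlonglongrightarrow> complex_of_real (measure M {a<..b})"
    using Levy_Inversion[OF ab] unfolding F_def .
  have truncated: "(CLBINT t=ereal (real_of_int (- int T))..ereal (real T). F t * char M t)
      = (\<integral>t. indicator {- real T<..<real T} t *\<^sub>R (F t * char M t) \<partial>lborel)" for T :: nat
    by (simp add: interval_lebesgue_integral_def set_lebesgue_integral_def)
  have "complex_of_real (measure M {a<..b})
      = complex_of_real (1 / (2 * pi)) * (\<integral>t. F t * char M t \<partial>lborel)"
    using LIMSEQ_unique[OF Levy[unfolded truncated] tendsto_mult[OF tendsto_const dc]] .
  also have "\<dots> = complex_of_real (1 / (2 * pi)) *
      (\<integral>x. indicator {a<..b} x *\<^sub>R fourier (char M) x \<partial>lborel)"
    unfolding F_def integral_Levy_kernel[OF \<phi> ab(1)] ..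
  finally have "measure M {a<..b}
      = Re (complex_of_real (1 / (2 * pi)) * (\<integral>x. indicator {a<..b} x *\<^sub>R fourier (char M) x \<partial>lborel))"
    by (metis Re_complex_of_real)
  also have "\<dots> = (\<integral>x. indicator {a<..b} x * Re (fourier (char M) x) \<partial>lborel) / (2 * pi)"
    using integral_Re[OF integrable_indicator_fourier[OF \<phi>]] by simp
  also have "\<dots> = (\<integral>x. indicator {a<..b} x * (Re (fourier (char M) x) / (2 * pi)) \<partial>lborel)"
    by simp
  finally show ?thesis .
qed

lemma integrable_Ioc_continuous:
  fixes p :: "real \<Rightarrow> real"
  assumes "continuous_on UNIV p"
  shows "integrable lborel (\<lambda>x. indicator {a<..b} x * p x)"
proof (rule Bochner_Integration.integrable_bound)
  show "integrable lborel (\<lambda>x. p x * indicator {a..b} x)"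
    using assms by (intro borel_integrable_atLeastAtMost) (simp add: continuous_on_eq_continuous_at)
  have [measurable]: "p \<in> borel_measurable borel"
    using assms by (rule borel_measurable_continuous_onI)
  show "(\<lambda>x. indicator {a<..b} x * p x) \<in> borel_measurable lborel"
    by measurable
qed (auto intro!: AE_I2 simp: indicator_def)

lemma nonneg_if_Ioc_integrals_nonneg:
  fixes p :: "real \<Rightarrow> real"
  assumes cont: "continuous_on UNIV p" and D: "countable D"
    and nonneg: "\<And>a b. a \<le> b \<Longrightarrow> a \<notin> D \<Longrightarrow> b \<notin> D \<Longrightarrow> 0 \<le> (\<integral>x. indicator {a<..b} x * p x \<partial>lborel)"
  shows "0 \<le> p x0"
proof (rule ccontr)
  assume "\<not> 0 \<le> p x0"
  then have neg: "p x0 < 0" by simp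
  then obtain d where d: "d > 0" "\<And>y. dist y x0 < d \<Longrightarrow> dist (p y) (p x0) < - p x0 / 2"
    using cont unfolding continuous_on_iff by (metis UNIV_I neg_0_less_iff_less half_gt_zero)
  have avoid: "\<exists>x. x \<in> {l<..<u} \<and> x \<notin> D" if "l < u" for l u
    using open_minus_countable[OF D, of "{l<..<u}"] that by auto
  obtain a where a: "a \<in> {x0 - d<..<x0}" "a \<notin> D" using avoid[of "x0 - d" x0] d by auto
  obtain b where b: "b \<in> {x0<..<x0 + d}" "b \<notin> D" using avoid[of x0 "x0 + d"] d by auto
  have ab: "a \<le> b" using a b by auto
  have "(\<integral>x. indicator {a<..b} x * p x \<partial>lborel) \<le> (\<integral>x. indicator {a<..b} x * (p x0 / 2) \<partial>lborel)"
  proof (rule integral_mono)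
    show "integrable lborel (\<lambda>x. indicator {a<..b} x * (p x0 / 2))"
      using ab by (intro integrable_mult_left) (simp add: integrable_indicator_iff)
    show "indicator {a<..b} y * p y \<le> indicator {a<..b} y * (p x0 / 2)" for y
    proof (cases "y \<in> {a<..b}")
      case True
      then have "dist y x0 < d" using a b by (auto simp: dist_real_def)
      from d(2)[OF this] have "p y < p x0 / 2" by (auto simp: dist_real_def)
      then show ?thesis using True by simp
    qed simp
  qed (rule integrable_Ioc_continuous[OF cont])
  also have "\<dots> = (b - a) * (p x0 / 2)" using ab by simp
  also have "\<dots> < 0" using a b neg by (intro mult_pos_neg) auto
  finally show False using nonneg[OF ab a(2) b(2)] by simp
qed

lemma emeasure_Iic_eq_if_Ioc_eq:
  fixes \<mu> \<nu> :: "real measure"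
  assumes sets: "sets \<mu> = sets borel" "sets \<nu> = sets borel" and D: "countable D" and b: "b \<notin> D"
    and eq: "\<And>a b. a \<le> b \<Longrightarrow> a \<notin> D \<Longrightarrow> b \<notin> D \<Longrightarrow> emeasure \<nu> {a<..b} = emeasure \<mu> {a<..b}"
  shows "emeasure \<nu> {..b} = emeasure \<mu> {..b}"
proof -
  have "\<exists>x. x \<in> {- real n - 1<..<- real n} \<and> x \<notin> D" for n :: nat
    using open_minus_countable[OF D, of "{- real n - 1<..<- real n}"] by auto
  then obtain a where a: "\<And>n. a n \<in> {- real n - 1<..<- real n} \<and> a n \<notin> D"
    by metis
  have inc: "incseq (\<lambda>n. {a n<..b})"
  proof (rule incseq_SucI)
    fix n
    have "a (Suc n) \<le> a n" using a[of n] a[of "Suc n"] by auto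
    then show "{a n<..b} \<subseteq> {a (Suc n)<..b}" by auto
  qed
  have union: "(\<Union>n. {a n<..b}) = {..b}"
  proof (intro equalityI subsetI)
    fix x assume "x \<in> {..b}"
    obtain n :: nat where "- x < real n" using reals_Archimedean2 by blast
    then have "a n < x" using a[of n] by auto
    with \<open>x \<in> {..b}\<close> show "x \<in> (\<Union>n. {a n<..b})" by auto
  qed auto
  have "emeasure \<nu> {a n<..b} = emeasure \<mu> {a n<..b}" for n
    using eq[of "a n" b] a[of n] b by (cases "a n \<le> b") auto
  moreover have "emeasure M {..b} = (SUP n. emeasure M {a n<..b})" if "sets M = sets borel" for M
    using SUP_emeasure_incseq[of "\<lambda>n. {a n<..b}" M] inc that by (simp add: union image_subset_iff)
  ultimately show ?thesis
    using sets by simp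
qed

text \<open>For probability distributions on the real line, agreement of the distribution functions
  outside a countable set already forces equality, by right-continuity.\<close>

lemma real_distribution_eqI_cdf:
  assumes \<mu>: "real_distribution \<mu>" and \<nu>: "real_distribution \<nu>" and D: "countable D"
    and eq: "\<And>x. x \<notin> D \<Longrightarrow> cdf \<nu> x = cdf \<mu> x"
  shows "\<nu> = \<mu>"
proof (rule cdf_unique[OF \<nu> \<mu>], rule ext, rule ccontr)
  interpret \<mu>: real_distribution \<mu> by fact
  interpret \<nu>: real_distribution \<nu> by fact
  fix x assume ne: "cdf \<nu> x \<noteq> cdf \<mu> x"
  let ?gap = "\<lambda>x. \<bar>cdf \<nu> x - cdf \<mu> x\<bar>"
  have "(?gap \<longlongrightarrow> ?gap x) (at_right x)"
    using \<nu>.cdf_is_right_cont[of x] \<mu>.cdf_is_right_cont[of x]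
    by (intro tendsto_intros) (auto simp: continuous_within)
  then have "eventually (\<lambda>y. \<bar>?gap y - ?gap x\<bar> < ?gap x) (at_right x)"
    using ne by (simp only: tendsto_iff dist_real_def)
  then obtain N where N: "N > x" "\<And>y. x < y \<Longrightarrow> y < N \<Longrightarrow> \<bar>?gap y - ?gap x\<bar> < ?gap x"
    by (auto simp: eventually_at_right[OF less_add_one])
  obtain y where y: "y \<in> {x<..<N}" "y \<notin> D"
    using open_minus_countable[OF D, of "{x<..<N}"] N(1) by auto
  have "\<bar>?gap y - ?gap x\<bar> < ?gap x"
    using N(2) y(1) by simp
  then show False
    using eq[OF y(2)] by simp
qed

lemma measure_eqI_Ioc_off_countable:
  fixes \<mu> \<nu> :: "real measure"
  assumes \<mu>: "real_distribution \<mu>" and sets_\<nu>: "sets \<nu> = sets borel" and D: "countable D"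
    and eq: "\<And>a b. a \<le> b \<Longrightarrow> a \<notin> D \<Longrightarrow> b \<notin> D \<Longrightarrow> emeasure \<nu> {a<..b} = emeasure \<mu> {a<..b}"
  shows "\<nu> = \<mu>"
proof -
  interpret \<mu>: real_distribution \<mu> by fact
  note Iic = emeasure_Iic_eq_if_Ioc_eq[OF _ sets_\<nu> D _ eq]
  have "\<exists>x. x \<in> {real n<..<real n + 1} \<and> x \<notin> D" for n :: nat
    using open_minus_countable[OF D, of "{real n<..<real n + 1}"] by auto
  then obtain c where c: "\<And>n. c n \<in> {real n<..<real n + 1} \<and> c n \<notin> D"
    by metis
  have inc: "incseq (\<lambda>n. {..c n})"
  proof (rule incseq_SucI)
    fix n
    have "c n \<le> c (Suc n)" using c[of n] c[of "Suc n"] by auto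
    then show "{..c n} \<subseteq> {..c (Suc n)}" by auto
  qed
  have union: "(\<Union>n. {..c n}) = UNIV"
  proof (intro equalityI subsetI)
    fix x :: real
    obtain n :: nat where "x < real n" using reals_Archimedean2 by blast
    then show "x \<in> (\<Union>n. {..c n})" using c[of n] by (auto intro!: exI[of _ n])
  qed auto
  have total: "emeasure M UNIV = (SUP n. emeasure M {..c n})" if "sets M = sets borel" for M
    using SUP_emeasure_incseq[of "\<lambda>n. {..c n}" M] inc that by (simp add: union image_subset_iff)
  have "emeasure \<nu> UNIV = emeasure \<mu> UNIV"
    using Iic c by (simp add: total sets_\<nu>)
  then have "prob_space \<nu>"
    using sets_eq_imp_space_eq[OF sets_\<nu>] \<mu>.emeasure_space_1
    by (intro prob_spaceI) (simp add: \<mu>.space_eq_univ)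
  then have \<nu>: "real_distribution \<nu>"
    using sets_\<nu> by (simp add: real_distribution_def real_distribution_axioms_def)
  show ?thesis
  proof (rule real_distribution_eqI_cdf[OF \<mu> \<nu> D])
    show "cdf \<nu> x = cdf \<mu> x" if "x \<notin> D" for x
      using Iic[OF _ that] by (simp add: cdf_def2 measure_def)
  qed
qed

lemma (in real_distribution) density_of_integrable_char:
  assumes \<phi>: "integrable lborel (char M)"
  defines "p \<equiv> \<lambda>x. Re (fourier (char M) x) / (2 * pi)"
  shows "\<forall>x. 0 \<le> p x" and "M = density lborel (\<lambda>x. ennreal (p x))"
proof -
  have cont: "continuous_on UNIV p"
    unfolding p_def using continuous_on_fourier[OF \<phi>] by (intro continuous_intros) auto
  have [measurable]: "p \<in> borel_measurable borel"
    using cont by (rule borel_measurable_continuous_onI)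
  define D where "D = {x. measure M {x} \<noteq> 0}"
  have D: "countable D"
    unfolding D_def by (rule countable_support)
  have inversion: "measure M {a<..b} = (\<integral>x. indicator {a<..b} x * p x \<partial>lborel)"
    if "a \<le> b" "a \<notin> D" "b \<notin> D" for a b
    using Levy_inversion_integrable[OF \<phi>] that by (simp add: D_def p_def)
  show nonneg: "\<forall>x. 0 \<le> p x"
    using nonneg_if_Ioc_integrals_nonneg[OF cont D] inversion by (metis measure_nonneg)
  show "M = density lborel (\<lambda>x. ennreal (p x))"
  proof (rule sym, rule measure_eqI_Ioc_off_countable[OF _ _ D])
    fix a b assume ab: "a \<le> b" "a \<notin> D" "b \<notin> D"
    have "emeasure (density lborel (\<lambda>x. ennreal (p x))) {a<..b}
        = (\<integral>\<^sup>+x. ennreal (indicator {a<..b} x * p x) \<partial>lborel)"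
      by (subst emeasure_density) (auto intro!: nn_integral_cong split: split_indicator)
    also have "\<dots> = ennreal (\<integral>x. indicator {a<..b} x * p x \<partial>lborel)"
      using nonneg by (intro nn_integral_eq_integral integrable_Ioc_continuous[OF cont] AE_I2) simp
    also have "\<dots> = emeasure M {a<..b}"
      by (simp add: inversion[OF ab] emeasure_eq_measure)
    finally show "emeasure (density lborel (\<lambda>x. ennreal (p x))) {a<..b} = emeasure M {a<..b}" .
  qed (unfold_locales, simp)
qed

lemma integrable_if_weighted_integrable:
  fixes F :: "real \<Rightarrow> complex"
  assumes cont: "continuous_on UNIV F" and bound: "\<And>t. cmod (F t) \<le> C"
    and weighted: "integrable lborel (\<lambda>t. \<bar>t\<bar> * cmod (F t))"
  shows "integrable lborel F" "integrable lborel (\<lambda>t. t * F t)"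
proof -
  have [measurable]: "F \<in> borel_measurable borel"
    using cont by (rule borel_measurable_continuous_onI)
  have dom: "integrable lborel (\<lambda>t. C * indicator {-1..1} t + \<bar>t\<bar> * cmod (F t))"
    using weighted by (intro Bochner_Integration.integrable_add integrable_mult_right)
      (simp_all add: integrable_indicator_iff)
  have le: "cmod (F t) \<le> C * indicator {-1..1} t + \<bar>t\<bar> * cmod (F t)" for t
  proof (cases "\<bar>t\<bar> \<le> 1")
    case True
    then show ?thesis using bound[of t] by (auto simp: indicator_def intro!: add_increasing2)
  next
    case False
    then have "cmod (F t) \<le> \<bar>t\<bar> * cmod (F t)"
      by (simp add: mult_le_cancel_right1)
    then show ?thesis using False by (auto simp: indicator_def)
  qed
  show "integrable lborel F"
    using le by (intro Bochner_Integration.integrable_bound[OF dom])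
      (auto intro!: AE_I2 order_trans[OF _ abs_ge_self])
  show "integrable lborel (\<lambda>t. t * F t)"
    by (rule Bochner_Integration.integrable_bound[OF weighted]) (auto simp: norm_mult)
qed

lemma fourier_cmult: "fourier (\<lambda>t. c * g t) x = c * fourier g x"
  by (simp add: fourier_def mult.assoc)

text \<open>Two integrations by parts: \<open>x\<^sup>2\<close> times the Fourier integral of \<open>t g(t)\<close> is, up to sign,
  the Fourier integral of \<open>(t g(t))'' = 2 g'(t) + t g''(t)\<close>.\<close>

lemma fourier_weighted_decay:
  fixes g g1 g2 :: "real \<Rightarrow> complex"
  assumes d1: "\<And>t. (g has_vector_derivative g1 t) (at t)"
    and d2: "\<And>t. (g1 has_vector_derivative g2 t) (at t)" and cont2: "continuous_on UNIV g2"
    and g: "integrable lborel g" "integrable lborel (\<lambda>t. t * g t)"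
    and g1: "integrable lborel g1" "integrable lborel (\<lambda>t. t * g1 t)"
    and g2: "integrable lborel (\<lambda>t. t * g2 t)"
  shows "x\<^sup>2 * cmod (fourier (\<lambda>t. t * g t) x) \<le> (\<integral>t. 2 * cmod (g1 t) + \<bar>t\<bar> * cmod (g2 t) \<partial>lborel)"
proof -
  define q q1 q2 where "q t = t * g t" and "q1 t = g t + t * g1 t" and "q2 t = 2 * g1 t + t * g2 t"
    for t :: real
  have cont: "continuous_on UNIV g" "continuous_on UNIV g1"
    using d1 d2 by (auto intro!: continuous_at_imp_continuous_on
        has_vector_derivative_continuous[THEN continuous_at_imp_continuous_within])
  have id: "((\<lambda>t. complex_of_real t) has_vector_derivative 1) (at t)" for t
    by (auto simp: has_vector_derivative_complex_iff intro!: derivative_eq_intros)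
  have dq: "(q has_vector_derivative q1 t) (at t)" for t
    using has_vector_derivative_mult[OF id d1[of t]]
    by (simp add: q_def[abs_def] q1_def algebra_simps)
  have dq1: "(q1 has_vector_derivative q2 t) (at t)" for t
    using has_vector_derivative_add[OF d1[of t]
        has_vector_derivative_mult[OF id d2[of t]]]
    by (simp add: q1_def[abs_def] q2_def algebra_simps)
  have cq: "continuous_on UNIV q" "continuous_on UNIV q1" "continuous_on UNIV q2"
    unfolding q_def[abs_def] q1_def[abs_def] q2_def[abs_def] using cont cont2
    by (auto intro!: continuous_intros)
  have iq: "integrable lborel q" "integrable lborel q1" "integrable lborel q2"
    unfolding q_def[abs_def] q1_def[abs_def] q2_def[abs_def] using g g1 g2 by auto
  have "fourier q2 x = (\<i> * x)\<^sup>2 * fourier q x"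
    using fourier_derivative[OF dq1 cq(2,3) iq(2,3)] fourier_derivative[OF dq cq(1,2) iq(1,2)]
    by (simp add: power2_eq_square)
  then have "x\<^sup>2 * cmod (fourier q x) = cmod (fourier q2 x)"
    by (simp add: norm_mult norm_power)
  also have "\<dots> \<le> (\<integral>t. cmod (q2 t) \<partial>lborel)"
    by (rule norm_fourier_le)
  also have "\<dots> \<le> (\<integral>t. 2 * cmod (g1 t) + \<bar>t\<bar> * cmod (g2 t) \<partial>lborel)"
  proof (rule integral_mono)
    show "integrable lborel (\<lambda>t. cmod (q2 t))" using iq(3) by auto
    show "integrable lborel (\<lambda>t. 2 * cmod (g1 t) + \<bar>t\<bar> * cmod (g2 t))"
      using integrable_norm[OF g1(1)] integrable_norm[OF g2] by (auto simp: norm_mult)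
    show "cmod (q2 t) \<le> 2 * cmod (g1 t) + \<bar>t\<bar> * cmod (g2 t)" for t
      unfolding q2_def using norm_triangle_ineq[of "2 * g1 t" "t * g2 t"] by (simp add: norm_mult)
  qed
  finally show ?thesis
    unfolding q_def .
qed

text \<open>Combined with the trivial bound, the Fourier integral of \<open>t g(t)\<close> decays like
  \<open>1 / (1 + x\<^sup>2)\<close>.\<close>

lemma fourier_weighted_bound:
  fixes g g1 g2 :: "real \<Rightarrow> complex"
  assumes d1: "\<And>t. (g has_vector_derivative g1 t) (at t)"
    and d2: "\<And>t. (g1 has_vector_derivative g2 t) (at t)" and cont2: "continuous_on UNIV g2"
    and g: "integrable lborel g" "integrable lborel (\<lambda>t. t * g t)"
    and g1: "integrable lborel g1" "integrable lborel (\<lambda>t. t * g1 t)"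
    and g2: "integrable lborel (\<lambda>t. t * g2 t)"
  shows "cmod (fourier (\<lambda>t. t * g t) x)
    \<le> ((\<integral>t. \<bar>t\<bar> * cmod (g t) \<partial>lborel) + (\<integral>t. 2 * cmod (g1 t) + \<bar>t\<bar> * cmod (g2 t) \<partial>lborel))
      / (1 + x\<^sup>2)"
proof -
  have "cmod (fourier (\<lambda>t. t * g t) x) \<le> (\<integral>t. \<bar>t\<bar> * cmod (g t) \<partial>lborel)"
    using norm_fourier_le[of "\<lambda>t. t * g t" x] by (simp add: norm_mult)
  moreover note fourier_weighted_decay[OF d1 d2 cont2 g g1 g2, of x]
  moreover have "0 < 1 + x\<^sup>2"
    by (simp add: add_pos_nonneg)
  ultimately show ?thesis
    by (simp add: pos_le_divide_eq algebra_simps)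
qed

lemma integral_abs_le_inverse_square:
  fixes h :: "real \<Rightarrow> real"
  assumes h: "h \<in> borel_measurable borel" and bound: "\<And>x. \<bar>h x\<bar> \<le> C / (1 + x\<^sup>2)"
  shows "integrable lborel (\<lambda>x. \<bar>h x\<bar>)" "(\<integral>x. \<bar>h x\<bar> \<partial>lborel) \<le> C * pi"
proof -
  have inv: "integrable lborel (\<lambda>x::real. inverse (1 + x\<^sup>2))"
    "(\<integral>x. inverse (1 + (x::real)\<^sup>2) \<partial>lborel) = pi"
    using integrable_inverse_1_plus_square LBINT_inverse_1_plus_square
    by (simp_all add: set_integrable_def interval_lebesgue_integral_def set_lebesgue_integral_def
        einterval_def)
  have C: "integrable lborel (\<lambda>x. C * inverse (1 + x\<^sup>2))"
    by (intro integrable_mult_right inv)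
  have bound': "\<bar>h x\<bar> \<le> C * inverse (1 + x\<^sup>2)" for x
    using bound[of x] by (simp add: divide_inverse)
  show int: "integrable lborel (\<lambda>x. \<bar>h x\<bar>)"
    by (rule Bochner_Integration.integrable_bound[OF C])
       (use h bound' in \<open>auto intro!: AE_I2 order_trans[OF _ abs_ge_self]\<close>)
  have "(\<integral>x. \<bar>h x\<bar> \<partial>lborel) \<le> (\<integral>x. C * inverse (1 + x\<^sup>2) \<partial>lborel)"
    by (intro integral_mono int C bound')
  then show "(\<integral>x. \<bar>h x\<bar> \<partial>lborel) \<le> C * pi"
    using inv(2) by simp
qed

text \<open>The total variation estimate: \<open>p = Re (fourier g) / 2\<pi>\<close> has the continuous derivative
  \<open>Re (fourier (-\<i> t g)) / 2\<pi>\<close>, bounded by \<open>|fourier (t g)| / 2\<pi> \<le> (A + B) / (2\<pi> (1 + x\<^sup>2))\<close>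
  with \<open>A = \<integral> |t g|\<close> and \<open>B = \<integral> 2 |g'| + |t g''|\<close>; integrating gives \<open>\<integral> |p'| \<le> (A + B) / 2\<close>.\<close>

lemma total_variation_inverse_fourier:
  fixes g g1 g2 :: "real \<Rightarrow> complex"
  assumes d1: "\<And>t. (g has_vector_derivative g1 t) (at t)"
    and d2: "\<And>t. (g1 has_vector_derivative g2 t) (at t)" and cont2: "continuous_on UNIV g2"
    and g: "integrable lborel g" "integrable lborel (\<lambda>t. t * g t)"
    and g1: "integrable lborel g1" "integrable lborel (\<lambda>t. t * g1 t)"
    and g2: "integrable lborel (\<lambda>t. t * g2 t)"
  defines "p \<equiv> \<lambda>x. Re (fourier g x) / (2 * pi)"
  shows "\<forall>x. p differentiable (at x)" "continuous_on UNIV (deriv p)"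
    "integrable lborel (\<lambda>x. \<bar>deriv p x\<bar>)"
    "(\<integral>x. \<bar>deriv p x\<bar> \<partial>lborel)
      \<le> 1/2 * (\<integral>t. \<bar>t\<bar> * cmod (g2 t) + 2 * cmod (g1 t) + \<bar>t\<bar> * cmod (g t) \<partial>lborel)"
proof -
  define A where "A = (\<integral>t. \<bar>t\<bar> * cmod (g t) \<partial>lborel)"
  define B where "B = (\<integral>t. 2 * cmod (g1 t) + \<bar>t\<bar> * cmod (g2 t) \<partial>lborel)"
  have g': "integrable lborel (\<lambda>t. - \<i> * t * g t)"
    using integrable_mult_right[OF g(2), of "- \<i>"] by (simp add: mult.assoc)
  have "(p has_real_derivative Re (fourier (\<lambda>t. - \<i> * t * g t) x) / (2 * pi)) (at x)" for x
    unfolding p_def using has_vector_derivative_fourier[OF g]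
    by (auto intro!: derivative_eq_intros)
  then have deriv_p: "deriv p = (\<lambda>x. Re (fourier (\<lambda>t. - \<i> * t * g t) x) / (2 * pi))"
    and diff: "\<forall>x. p differentiable (at x)"
    by (auto intro!: DERIV_imp_deriv simp: real_differentiable_def)
  show "\<forall>x. p differentiable (at x)" by (rule diff)
  show cont: "continuous_on UNIV (deriv p)"
    unfolding deriv_p using continuous_on_fourier[OF g'] by (intro continuous_intros) auto
  have bound: "\<bar>deriv p x\<bar> \<le> (A + B) / (2 * pi) / (1 + x\<^sup>2)" for x
  proof -
    have "fourier (\<lambda>t. - \<i> * t * g t) x = - \<i> * fourier (\<lambda>t. t * g t) x"
      using fourier_cmult[of "- \<i>" "\<lambda>t. t * g t"] by (simp add: mult.assoc)
    then have "\<bar>deriv p x\<bar> \<le> cmod (fourier (\<lambda>t. t * g t) x) / (2 * pi)"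
      unfolding deriv_p using abs_Re_le_cmod[of "- \<i> * fourier (\<lambda>t. t * g t) x"]
      by (simp add: divide_right_mono norm_mult)
    also have "\<dots> \<le> (A + B) / (1 + x\<^sup>2) / (2 * pi)"
      unfolding A_def B_def by (intro divide_right_mono fourier_weighted_bound[OF d1 d2 cont2 g g1 g2]) simp
    finally show ?thesis
      by (simp add: field_simps)
  qed
  note abs_deriv = integral_abs_le_inverse_square[OF borel_measurable_continuous_onI[OF cont] bound]
  show "integrable lborel (\<lambda>x. \<bar>deriv p x\<bar>)"
    by (rule abs_deriv(1))
  have "(\<integral>t. \<bar>t\<bar> * cmod (g2 t) + 2 * cmod (g1 t) + \<bar>t\<bar> * cmod (g t) \<partial>lborel) = B + A"
    unfolding A_def B_def
    using integrable_norm[OF g(2)] integrable_norm[OF g1(1)] integrable_norm[OF g2]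
    by (subst Bochner_Integration.integral_add[symmetric]) (auto simp: norm_mult ac_simps)
  then show "(\<integral>x. \<bar>deriv p x\<bar> \<partial>lborel)
      \<le> 1/2 * (\<integral>t. \<bar>t\<bar> * cmod (g2 t) + 2 * cmod (g1 t) + \<bar>t\<bar> * cmod (g t) \<partial>lborel)"
    using abs_deriv(2) by simp
qed


lemma (in real_distribution) vector_derivative_char_moment:
  assumes "integrable M (\<lambda>x. x ^ k)" "integrable M (\<lambda>x. x ^ Suc k)"
  shows "(\<lambda>t. vector_derivative (char_moment M k) (at t)) = char_moment M (Suc k)"
  using has_vector_derivative_char_moment[OF assms] by (intro ext vector_derivative_at)

lemma (in real_distribution) integrable_char_moment:
  assumes moment: "integrable M (\<lambda>x. x ^ k)"
    and dom: "\<And>t. cmod (char_moment M k t) \<le> W t" and W: "integrable lborel (\<lambda>t. \<bar>t\<bar> * W t)"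
  shows "integrable lborel (char_moment M k)" "integrable lborel (\<lambda>t. t * char_moment M k t)"
proof -
  note cont = continuous_on_char_moment[OF moment]
  have [measurable]: "char_moment M k \<in> borel_measurable borel"
    by (rule borel_measurable_continuous_onI[OF cont])
  have "\<bar>t\<bar> * cmod (char_moment M k t) \<le> norm (\<bar>t\<bar> * W t)" for t
    using mult_left_mono[OF dom[of t], of "\<bar>t\<bar>"] abs_ge_self[of "\<bar>t\<bar> * W t"] by simp
  then have "integrable lborel (\<lambda>t. \<bar>t\<bar> * cmod (char_moment M k t))"
    by (intro Bochner_Integration.integrable_bound[OF W]) (auto intro!: AE_I2)
  from integrable_if_weighted_integrable[OF cont norm_char_moment_le this]
  show "integrable lborel (char_moment M k)" "integrable lborel (\<lambda>t. t * char_moment M k t)" .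
qed

theorem proposition5p1:
  fixes M :: "'a measure" and X :: "'a \<Rightarrow> real"
    and f f' f'' :: "real \<Rightarrow> complex"
  assumes "prob_space M"
    and "X \<in> borel_measurable M"
    and "integrable M (\<lambda>\<omega>. (X \<omega>)\<^sup>2)"
    and f_def: "f = char (distr M borel X)"
    and f'_def: "f' = (\<lambda>t. vector_derivative f (at t))"
    and f''_def: "f'' = (\<lambda>t. vector_derivative f' (at t))"
    and "integrable lborel (\<lambda>t. \<bar>t\<bar> * (cmod (f t) + cmod (f' t) + cmod (f'' t)))"
  shows "\<exists>p :: real \<Rightarrow> real.
           (\<forall>x. 0 \<le> p x) \<and>
           distributed M lborel X (\<lambda>x. ennreal (p x)) \<and>
           (\<forall>x. p differentiable (at x)) \<and> continuous_on UNIV (deriv p) \<and>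
           integrable lborel (\<lambda>x. \<bar>deriv p x\<bar>) \<and>
           (\<integral>x. \<bar>deriv p x\<bar> \<partial>lborel)
             \<le> 1/2 * (\<integral>t. (\<bar>t\<bar> * cmod (f'' t) + 2 * cmod (f' t) + \<bar>t\<bar> * cmod (f t)) \<partial>lborel)"
proof -
  interpret prob_space M by fact
  define \<mu> where "\<mu> = distr M borel X"
  interpret \<mu>: real_distribution \<mu>
    unfolding \<mu>_def using assms(2) by simp
  have moments: "integrable \<mu> (\<lambda>x. x ^ k)" if "k \<le> 2" for k
    using \<mu>.integrable_power_le_2[of "\<lambda>x. x", OF _ _ that] assms(2,3)
    by (simp add: \<mu>_def integrable_distr_eq)
  have f: "f = char_moment \<mu> 0" "f' = char_moment \<mu> 1" "f'' = char_moment \<mu> 2"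
    using \<mu>.vector_derivative_char_moment[OF moments moments, of 0]
      \<mu>.vector_derivative_char_moment[OF moments moments, of 1]
    by (simp_all add: f_def f'_def f''_def \<mu>_def char_moment_0 numeral_2_eq_2)
  have dom: "cmod (char_moment \<mu> k t) \<le> cmod (f t) + cmod (f' t) + cmod (f'' t)" if "k \<le> 2" for k t
    using that by (auto simp: f le_Suc_eq numeral_2_eq_2)
  note integrable = \<mu>.integrable_char_moment[OF moments dom assms(7)]
  have f_integrable: "integrable lborel f" "integrable lborel (\<lambda>t. t * f t)"
    "integrable lborel f'" "integrable lborel (\<lambda>t. t * f' t)" "integrable lborel (\<lambda>t. t * f'' t)"
    using integrable[of 0] integrable[of 1] integrable[of 2] by (simp_all add: f)
  have f'': "continuous_on UNIV f''"
    using \<mu>.continuous_on_char_moment[OF moments[of 2]] by (simp add: f)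
  have derivatives: "(f has_vector_derivative f' t) (at t)" "(f' has_vector_derivative f'' t) (at t)" for t
    using \<mu>.has_vector_derivative_char_moment[OF moments moments, of 0 t]
      \<mu>.has_vector_derivative_char_moment[OF moments moments, of 1 t]
    by (simp_all add: f numeral_2_eq_2)
  define p where "p = (\<lambda>x. Re (fourier f x) / (2 * pi))"
  have "f = char \<mu>"
    by (simp add: f_def \<mu>_def)
  note density = \<mu>.density_of_integrable_char[folded this p_def, OF f_integrable(1)]
  have [measurable]: "fourier f \<in> borel_measurable borel"
    by (rule borel_measurable_fourier[OF f_integrable(1)])
  have "distributed M lborel X (\<lambda>x. ennreal (p x))"
    using density(2) assms(2) by (simp add: distributed_def \<mu>_def p_def cong: distr_cong)
  moreover have "\<forall>x. 0 \<le> p x"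
    using density(1) by (simp add: p_def)
  ultimately show ?thesis
    using total_variation_inverse_fourier[OF derivatives f'' f_integrable, folded p_def]
    by (intro exI[of _ p] conjI) auto
qed

end
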